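(* (a) $\mathcal{A}_<$ is $\boldsymbol{\Sigma}^0_1$ and hence $\mathcal{A}_\ge$ is $\boldsymbol{\Pi}^0_1$; $\mathcal{A}_\le$ is $\boldsymbol{\Pi}^0_2$ and hence $\mathcal{A}_>$ is $\boldsymbol{\Sigma}^0_2$; therefore $\mathcal{A}$ is $\boldsymbol{\Pi}^0_2$. (b) $\mathcal{B}^-_\le$ is $\boldsymbol{\Pi}^0_2$, $\mathcal{B}^-_\ge$ and $\mathcal{B}^+_\ge$ are $\boldsymbol{\Pi}^0_3$, and $\mathcal{B}^+_\le$ is $\boldsymbol{\Pi}^0_4$; therefore $\mathcal{B}^-_>$ is $\boldsymbol{\Sigma}^0_2$, $\mathcal{B}^-_<$ and $\mathcal{B}^+_<$ are $\boldsymbol{\Sigma}^0_3$, and $\mathcal{B}^+_>$ is $\boldsymbol{\Sigma}^0_4$; and $\mathcal{B}$ is $\boldsymbol{\Pi}^0_4$.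
   Context: $2^{\omega}$ is the Cantor space; $N_s=\{x\in2^\omega:s\subset x\}$; $\mu$ is the coin-tossing measure, $\mu(N_s)=2^{-\mathrm{lh}(s)}$. $\mathbf{K}$ is the Polish space of compact subsets of $2^\omega$ with the Vietoris topology; $\omega$ is discrete. For compact $K$ and $z\in2^\omega$: $\mathcal{D}^+_K(z)=\limsup_n\mu(K\cap N_{z\restriction n})/\mu(N_{z\restriction n})$, $\mathcal{D}^-_K(z)=\liminf_n$ of the same, $\mathcal{D}_K(z)$ the limit when it exists. For $\bowtie\in\{<,>,\le,\ge\}$: $\mathcal{A}_\bowtie=\{(K,z,n,r)\in\mathbf{K}\times2^\omega\times\omega\times[0;1]:\mu(K\cap N_{z\restriction n})\bowtie r\}$, $\mathcal{A}=\mathcal{A}_\le\cap\mathcal{A}_\ge$, $\mathcal{B}^\pm_\bowtie=\{(K,z,r)\in\mathbf{K}\times2^\omega\times[0;1]:\mathcal{D}^\pm_K(z)\bowtie r\}$, and $\mathcal{B}=\mathcal{B}^+_\le\cap\mathcal{B}^-_\ge=\{(K,z,r):\mathcal{D}_K(z)=r\}$. *)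

theory Defs
  imports "HOL-Analysis.Analysis" "HOL-Probability.Probability"
begin

definition cantor :: "(nat \<Rightarrow> bool) topology" where
  "cantor = product_topology (\<lambda>_. discrete_topology (UNIV :: bool set)) UNIV"

definition coin :: "(nat \<Rightarrow> bool) measure" where
  "coin = PiM UNIV (\<lambda>_::nat. measure_pmf (bernoulli_pmf (1/2)))"

definition mu :: "(nat \<Rightarrow> bool) set \<Rightarrow> real" where
  "mu A = measure coin A"

definition Nbhd :: "bool list \<Rightarrow> (nat \<Rightarrow> bool) set" where
  "Nbhd s = {x. \<forall>i<length s. x i = s ! i}"

definition restr :: "(nat \<Rightarrow> bool) \<Rightarrow> nat \<Rightarrow> bool list" where
  "restr z n = map z [0..<n]"

definition vietoris :: "'a topology \<Rightarrow> 'a set topology" where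
  "vietoris X = topology_generated_by
     ({{K. compactin X K \<and> K \<subseteq> U} | U. openin X U} \<union>
      {{K. compactin X K \<and> K \<inter> U \<noteq> {}} | U. openin X U})"

fun sigma0 :: "'a topology \<Rightarrow> nat \<Rightarrow> 'a set set" where
  "sigma0 X 0 = {}"
| "sigma0 X (Suc 0) = Collect (openin X)"
| "sigma0 X (Suc (Suc n)) =
     {\<Union> (range f) | f. \<forall>i::nat. f i \<in> {topspace X - A | A. A \<in> sigma0 X (Suc n)}}"

definition pi0 :: "'a topology \<Rightarrow> nat \<Rightarrow> 'a set set" where
  "pi0 X n = {topspace X - A | A. A \<in> sigma0 X n}"

definition unit_iv :: "real topology" where
  "unit_iv = subtopology euclideanreal {0..1}"

definition spaceA :: "((nat \<Rightarrow> bool) set \<times> (nat \<Rightarrow> bool) \<times> nat \<times> real) topology" where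
  "spaceA = prod_topology (vietoris cantor)
      (prod_topology cantor (prod_topology (discrete_topology UNIV) unit_iv))"

definition spaceB :: "((nat \<Rightarrow> bool) set \<times> (nat \<Rightarrow> bool) \<times> real) topology" where
  "spaceB = prod_topology (vietoris cantor) (prod_topology cantor unit_iv)"

definition setA :: "(real \<Rightarrow> real \<Rightarrow> bool) \<Rightarrow> ((nat \<Rightarrow> bool) set \<times> (nat \<Rightarrow> bool) \<times> nat \<times> real) set" where
  "setA R = {(K, z, n, r). (K, z, n, r) \<in> topspace spaceA \<and> R (mu (K \<inter> Nbhd (restr z n))) r}"

definition ratio :: "(nat \<Rightarrow> bool) set \<Rightarrow> (nat \<Rightarrow> bool) \<Rightarrow> nat \<Rightarrow> real" where
  "ratio K z n = mu (K \<inter> Nbhd (restr z n)) / mu (Nbhd (restr z n))"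

definition Dplus :: "(nat \<Rightarrow> bool) set \<Rightarrow> (nat \<Rightarrow> bool) \<Rightarrow> ereal" where
  "Dplus K z = limsup (\<lambda>n. ereal (ratio K z n))"

definition Dminus :: "(nat \<Rightarrow> bool) set \<Rightarrow> (nat \<Rightarrow> bool) \<Rightarrow> ereal" where
  "Dminus K z = liminf (\<lambda>n. ereal (ratio K z n))"

definition setBplus :: "(ereal \<Rightarrow> ereal \<Rightarrow> bool) \<Rightarrow> ((nat \<Rightarrow> bool) set \<times> (nat \<Rightarrow> bool) \<times> real) set" where
  "setBplus R = {(K, z, r). (K, z, r) \<in> topspace spaceB \<and> R (Dplus K z) (ereal r)}"

definition setBminus :: "(ereal \<Rightarrow> ereal \<Rightarrow> bool) \<Rightarrow> ((nat \<Rightarrow> bool) set \<times> (nat \<Rightarrow> bool) \<times> real) set" where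
  "setBminus R = {(K, z, r). (K, z, r) \<in> topspace spaceB \<and> R (Dminus K z) (ereal r)}"

end

theory Submission
  imports Defs
begin

(* A compact K is closed, so mu (K \<inter> N_s) is the decreasing limit of the measures of the clopen
   covers {x. x|j \<in> prefixes j K}, and prefixes j K depends locally constantly on K in the Vietoris
   topology. Hence the sublevel sets {mu (K \<inter> N_(z|n)) < q} and {ratio K z n < q} are countable unions
   of clopen sets, i.e. open and F_sigma. Writing each set of the lemma with rational thresholds then
   exhibits it as a countable Boolean combination of such sublevel sets and of half-lines in the
   coordinate r, where liminf and limsup each contribute one block of quantifiers over n. *)

section \<open>The Borel hierarchy\<close>

lemma sigma0_Suc_Suc: "sigma0 X (Suc (Suc n)) = {\<Union>(range f) | f. \<forall>i::nat. f i \<in> pi0 X (Suc n)}"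
  by (simp add: pi0_def)

lemma Diff_in_pi0: "A \<in> sigma0 X n \<Longrightarrow> topspace X - A \<in> pi0 X n"
  unfolding pi0_def by blast

lemma topspace_empty_in_sigma0: "topspace X \<in> sigma0 X (Suc n) \<and> {} \<in> sigma0 X (Suc n)"
proof (induction n)
  case (Suc n)
  then have "topspace X - {} \<in> pi0 X (Suc n)" "topspace X - topspace X \<in> pi0 X (Suc n)"
    by (blast intro: Diff_in_pi0)+
  then have "(\<Union>_::nat. topspace X - {}) \<in> sigma0 X (Suc (Suc n))"
    "(\<Union>_::nat. topspace X - topspace X) \<in> sigma0 X (Suc (Suc n))"
    unfolding sigma0_Suc_Suc by blast+
  then show ?case by simp
qed simp

lemma sigma0_Suc_Suc_Union:
  assumes "countable \<S>" "\<And>S. S \<in> \<S> \<Longrightarrow> S \<in> pi0 X (Suc n)"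
  shows "\<Union>\<S> \<in> sigma0 X (Suc (Suc n))"
proof (cases "\<S> = {}")
  case True
  then have "\<Union>\<S> = (\<Union>_::nat. topspace X - topspace X)" by simp
  then show ?thesis using topspace_empty_in_sigma0 by (fastforce simp: pi0_def)
next
  case False
  then have "\<Union>\<S> = (\<Union>k. from_nat_into \<S> k)" "\<forall>k. from_nat_into \<S> k \<in> pi0 X (Suc n)"
    using assms by (simp_all add: from_nat_into)
  then show ?thesis by (auto simp: pi0_def)
qed

lemma pi0_Suc_Suc_INT:
  assumes "countable I" "\<And>i. i \<in> I \<Longrightarrow> S i \<in> sigma0 X (Suc n)"
  shows "topspace X \<inter> (\<Inter>i\<in>I. S i) \<in> pi0 X (Suc (Suc n))"
proof -
  have "topspace X \<inter> (\<Inter>i\<in>I. S i) = topspace X - (\<Union>i\<in>I. topspace X - S i)" by auto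
  moreover have "(\<Union>i\<in>I. topspace X - S i) \<in> sigma0 X (Suc (Suc n))"
    using assms by (intro sigma0_Suc_Suc_Union) (auto intro: Diff_in_pi0)
  ultimately show ?thesis by (simp add: Diff_in_pi0)
qed

lemma sigma0_Suc_Suc_Un:
  assumes "A \<in> sigma0 X (Suc (Suc n))" "B \<in> sigma0 X (Suc (Suc n))"
  shows "A \<union> B \<in> sigma0 X (Suc (Suc n))"
proof -
  obtain f g :: "nat \<Rightarrow> 'a set" where "A = \<Union>(range f)" "B = \<Union>(range g)"
    and "\<forall>i. f i \<in> pi0 X (Suc n)" "\<forall>i. g i \<in> pi0 X (Suc n)"
    using assms unfolding sigma0_Suc_Suc by blast
  then have "A \<union> B = \<Union>(range f \<union> range g)" "\<forall>S \<in> range f \<union> range g. S \<in> pi0 X (Suc n)"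
    by auto
  then show ?thesis using sigma0_Suc_Suc_Union[of "range f \<union> range g" X n] by simp
qed

lemma sigma0_1: "A \<in> sigma0 X 1 \<longleftrightarrow> openin X A"
  by simp

lemma pi0_1: "A \<in> pi0 X (Suc 0) \<longleftrightarrow> closedin X A"
  by (auto simp: pi0_def closedin_def)

lemma sigma0_2: "A \<in> sigma0 X 2 \<longleftrightarrow> fsigma_in X A"
proof
  assume "A \<in> sigma0 X 2"
  then obtain f :: "nat \<Rightarrow> 'a set" where "A = \<Union>(range f)" "\<forall>i. f i \<in> pi0 X (Suc 0)"
    unfolding numeral_2_eq_2 sigma0_Suc_Suc by blast
  then show "fsigma_in X A" by (auto simp: pi0_1 intro!: fsigma_in_Union intro: closed_imp_fsigma_in)
next
  assume "fsigma_in X A"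
  then obtain C :: "nat \<Rightarrow> 'a set" where "\<forall>n. C n \<in> pi0 X (Suc 0)" "\<Union>(range C) = A"
    by (auto simp: fsigma_in_ascending pi0_1)
  then show "A \<in> sigma0 X 2"
    unfolding numeral_2_eq_2 sigma0_Suc_Suc by blast
qed

lemma pi0_2: "A \<in> pi0 X 2 \<longleftrightarrow> gdelta_in X A"
  by (auto simp: pi0_def sigma0_2 gdelta_in_fsigma_in fsigma_in_subset double_diff)

lemma sigma0_3_UnionI:
  assumes "countable \<S>" "\<And>S. S \<in> \<S> \<Longrightarrow> gdelta_in X S"
  shows "\<Union>\<S> \<in> sigma0 X 3"
proof -
  have "\<Union>\<S> \<in> sigma0 X (Suc (Suc 1))"
    using assms by (intro sigma0_Suc_Suc_Union) (simp_all only: Suc_1 pi0_2)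
  then show ?thesis by (simp only: Suc_1 Suc_numeral) simp
qed

lemma pi0_3_INTI:
  assumes "countable I" "\<And>i. i \<in> I \<Longrightarrow> fsigma_in X (S i)"
  shows "topspace X \<inter> (\<Inter>i\<in>I. S i) \<in> pi0 X 3"
proof -
  have "topspace X \<inter> (\<Inter>i\<in>I. S i) \<in> pi0 X (Suc (Suc 1))"
    using assms by (intro pi0_Suc_Suc_INT) (simp_all only: Suc_1 sigma0_2)
  then show ?thesis by (simp only: Suc_1 Suc_numeral) simp
qed

lemma sigma0_4_UnionI:
  assumes "countable \<S>" "\<And>S. S \<in> \<S> \<Longrightarrow> S \<in> pi0 X 3"
  shows "\<Union>\<S> \<in> sigma0 X 4"
proof -
  have "\<Union>\<S> \<in> sigma0 X (Suc (Suc 2))"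
    using assms by (intro sigma0_Suc_Suc_Union) (simp_all only: Suc_numeral semiring_norm)
  then show ?thesis by (simp only: Suc_numeral semiring_norm)
qed

lemma sigma0_4_Un:
  assumes "A \<in> sigma0 X 4" "B \<in> sigma0 X 4"
  shows "A \<union> B \<in> sigma0 X 4"
  using sigma0_Suc_Suc_Un[of A X 2 B] assms by (simp only: Suc_numeral semiring_norm)

section \<open>Rational witnesses for strict inequalities\<close>

lemma less_iff_Rat_between: "(x::real) < y \<longleftrightarrow> (\<exists>q\<in>\<rat>. x < q \<and> q < y)"
proof
  assume "x < y"
  then show "\<exists>q\<in>\<rat>. x < q \<and> q < y" using Rats_dense_in_real by blast
qed auto

lemma less_iff_Rat_le: "(x::real) < y \<longleftrightarrow> (\<exists>q\<in>\<rat>. x < q \<and> q \<le> y)"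
  by (meson less_iff_Rat_between less_imp_le order.strict_trans2)

lemma less_iff_Rats_between:
  "(x::real) < y \<longleftrightarrow> (\<exists>q1\<in>\<rat>. \<exists>q2\<in>\<rat>. x \<le> q1 \<and> q1 < q2 \<and> q2 \<le> y)"
proof
  assume "x < y"
  obtain q1 where "q1 \<in> \<rat>" "x < q1" "q1 < y" using Rats_dense_in_real \<open>x < y\<close> by blast
  moreover obtain q2 where "q2 \<in> \<rat>" "q1 < q2" "q2 < y" using Rats_dense_in_real \<open>q1 < y\<close> by blast
  ultimately show "\<exists>q1\<in>\<rat>. \<exists>q2\<in>\<rat>. x \<le> q1 \<and> q1 < q2 \<and> q2 \<le> y"
    using less_imp_le by blast
qed auto

lemma countable_Rats_less_pairs: "countable {(q1::real, q2). q1 \<in> \<rat> \<and> q2 \<in> \<rat> \<and> q1 < q2}"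
  by (rule countable_subset[of _ "\<rat> \<times> \<rat>"]) (auto intro: countable_rat)

lemma ereal_less_Rats_between:
  fixes x y :: ereal
  assumes "x < y"
  obtains q where "q \<in> \<rat>" "x < ereal q" "ereal q < y"
proof -
  obtain z1 where z1: "x < ereal z1" "ereal z1 < y" using ereal_dense2[OF assms] by blast
  obtain z2 where z2: "ereal z1 < ereal z2" "ereal z2 < y" using ereal_dense2[OF z1(2)] by blast
  obtain q where q: "q \<in> \<rat>" "z1 < q" "q < z2" using Rats_dense_in_real z2(1) by auto
  then have "ereal z1 < ereal q" "ereal q < ereal z2" by simp_all
  with q z1 z2 show ?thesis using that order.strict_trans by blast
qed

lemma ereal_less_liminf_iff_Rats:
  "ereal r < liminf (\<lambda>n. ereal (s n)) \<longleftrightarrow>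
    (\<exists>q1\<in>\<rat>. \<exists>q2\<in>\<rat>. r \<le> q1 \<and> q1 < q2 \<and> (\<forall>\<^sub>F n in sequentially. q2 \<le> s n))"
    (is "_ < ?L \<longleftrightarrow> _")
proof
  assume "ereal r < ?L"
  then obtain q1 where q1: "q1 \<in> \<rat>" "r < q1" "ereal q1 < ?L"
    by (auto elim: ereal_less_Rats_between)
  then obtain q2 where q2: "q2 \<in> \<rat>" "q1 < q2" "ereal q2 < ?L"
    by (auto elim: ereal_less_Rats_between)
  have "\<forall>\<^sub>F n in sequentially. q2 \<le> s n"
    using less_LiminfD[OF q2(3)] by (rule eventually_mono) simp
  with q1 q2 show "\<exists>q1\<in>\<rat>. \<exists>q2\<in>\<rat>. r \<le> q1 \<and> q1 < q2 \<and> (\<forall>\<^sub>F n in sequentially. q2 \<le> s n)"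
    using less_imp_le by blast
next
  assume "\<exists>q1\<in>\<rat>. \<exists>q2\<in>\<rat>. r \<le> q1 \<and> q1 < q2 \<and> (\<forall>\<^sub>F n in sequentially. q2 \<le> s n)"
  then obtain q1 q2 where "r \<le> q1" "q1 < q2" "\<forall>\<^sub>F n in sequentially. q2 \<le> s n" by blast
  then have "ereal q2 \<le> ?L" by (intro Liminf_bounded) auto
  moreover have "ereal r < ereal q2" using \<open>r \<le> q1\<close> \<open>q1 < q2\<close> by simp
  ultimately show "ereal r < ?L" by (rule order.strict_trans2[rotated])
qed

lemma liminf_less_ereal_iff_Rats:
  "liminf (\<lambda>n. ereal (s n)) < ereal r \<longleftrightarrow> (\<exists>q\<in>\<rat>. q < r \<and> (\<exists>\<^sub>F n in sequentially. s n < q))"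
    (is "?L < _ \<longleftrightarrow> _")
proof
  assume "?L < ereal r"
  then obtain q where q: "q \<in> \<rat>" "?L < ereal q" "q < r"
    by (auto elim: ereal_less_Rats_between)
  have "\<exists>\<^sub>F n in sequentially. s n < q"
  proof (rule ccontr)
    assume "\<not> (\<exists>\<^sub>F n in sequentially. s n < q)"
    then have "ereal q \<le> ?L" by (intro Liminf_bounded) (auto simp: not_frequently not_less)
    with q show False by simp
  qed
  with q show "\<exists>q\<in>\<rat>. q < r \<and> (\<exists>\<^sub>F n in sequentially. s n < q)" by blast
next
  assume "\<exists>q\<in>\<rat>. q < r \<and> (\<exists>\<^sub>F n in sequentially. s n < q)"
  then obtain q where q: "q < r" "\<exists>\<^sub>F n in sequentially. s n < q" by blast
  have "?L \<le> ereal q"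
  proof (rule ccontr)
    assume "\<not> ?L \<le> ereal q"
    then have "\<forall>\<^sub>F n in sequentially. \<not> s n < q"
      using less_LiminfD[of "ereal q" sequentially "\<lambda>n. ereal (s n)"]
      by (auto simp: not_le elim: eventually_mono)
    with q(2) show False by (simp add: not_frequently[symmetric])
  qed
  with q(1) show "?L < ereal r" by (simp add: order.strict_trans1)
qed

lemma liminf_less_ereal_iff_Rats_le:
  "liminf (\<lambda>n. ereal (s n)) < ereal r \<longleftrightarrow>
    (\<exists>q1\<in>\<rat>. \<exists>q2\<in>\<rat>. q1 < q2 \<and> q2 \<le> r \<and> (\<exists>\<^sub>F n in sequentially. s n < q1))"
  unfolding liminf_less_ereal_iff_Rats
proof safe
  fix q assume "q \<in> \<rat>" "q < r" "\<exists>\<^sub>F n in sequentially. s n < q"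
  moreover obtain q2 where "q2 \<in> \<rat>" "q < q2" "q2 < r" using Rats_dense_in_real \<open>q < r\<close> by blast
  ultimately show "\<exists>q1\<in>\<rat>. \<exists>q2\<in>\<rat>. q1 < q2 \<and> q2 \<le> r \<and> (\<exists>\<^sub>F n in sequentially. s n < q1)"
    using less_imp_le by blast
next
  fix q1 q2 assume "q1 \<in> \<rat>" "q1 < q2" "q2 \<le> r" "\<exists>\<^sub>F n in sequentially. s n < q1"
  then show "\<exists>q\<in>\<rat>. q < r \<and> (\<exists>\<^sub>F n in sequentially. s n < q)" by force
qed

lemma limsup_less_ereal_iff_Rats:
  "limsup (\<lambda>n. ereal (s n)) < ereal r \<longleftrightarrow> (\<exists>q\<in>\<rat>. q < r \<and> (\<forall>\<^sub>F n in sequentially. s n < q))"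
    (is "?L < _ \<longleftrightarrow> _")
proof
  assume "?L < ereal r"
  then obtain q where q: "q \<in> \<rat>" "?L < ereal q" "q < r"
    by (auto elim: ereal_less_Rats_between)
  then have "\<forall>\<^sub>F n in sequentially. s n < q"
    by (auto dest: Limsup_lessD elim: eventually_mono)
  with q show "\<exists>q\<in>\<rat>. q < r \<and> (\<forall>\<^sub>F n in sequentially. s n < q)" by blast
next
  assume "\<exists>q\<in>\<rat>. q < r \<and> (\<forall>\<^sub>F n in sequentially. s n < q)"
  then obtain q where "q < r" "\<forall>\<^sub>F n in sequentially. s n < q" by blast
  then have "?L \<le> ereal q" by (intro Limsup_bounded) (auto elim: eventually_mono)
  with \<open>q < r\<close> show "?L < ereal r" by (simp add: order.strict_trans1)
qed

lemma ereal_less_limsup_iff_Rats: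
  "ereal r < limsup (\<lambda>n. ereal (s n)) \<longleftrightarrow>
    (\<exists>q1\<in>\<rat>. \<exists>q2\<in>\<rat>. r \<le> q1 \<and> q1 < q2 \<and> (\<exists>\<^sub>F n in sequentially. q2 \<le> s n))"
    (is "_ < ?L \<longleftrightarrow> _")
proof
  assume "ereal r < ?L"
  then obtain q1 where q1: "q1 \<in> \<rat>" "r < q1" "ereal q1 < ?L"
    by (auto elim: ereal_less_Rats_between)
  then obtain q2 where q2: "q2 \<in> \<rat>" "q1 < q2" "ereal q2 < ?L"
    by (auto elim: ereal_less_Rats_between)
  have "\<exists>\<^sub>F n in sequentially. q2 \<le> s n"
  proof (rule ccontr)
    assume "\<not> (\<exists>\<^sub>F n in sequentially. q2 \<le> s n)"
    then have "?L \<le> ereal q2"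
      by (intro Limsup_bounded) (auto simp: not_frequently not_le elim: eventually_mono)
    with q2 show False by simp
  qed
  with q1 q2 show "\<exists>q1\<in>\<rat>. \<exists>q2\<in>\<rat>. r \<le> q1 \<and> q1 < q2 \<and> (\<exists>\<^sub>F n in sequentially. q2 \<le> s n)"
    using less_imp_le by blast
next
  assume "\<exists>q1\<in>\<rat>. \<exists>q2\<in>\<rat>. r \<le> q1 \<and> q1 < q2 \<and> (\<exists>\<^sub>F n in sequentially. q2 \<le> s n)"
  then obtain q1 q2 where q: "r \<le> q1" "q1 < q2" "\<exists>\<^sub>F n in sequentially. q2 \<le> s n" by blast
  have "ereal q2 \<le> ?L"
  proof (rule ccontr)
    assume "\<not> ereal q2 \<le> ?L"
    then have "\<forall>\<^sub>F n in sequentially. \<not> q2 \<le> s n"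
      using Limsup_lessD[of sequentially "\<lambda>n. ereal (s n)" "ereal q2"]
      by (auto simp: not_le elim: eventually_mono)
    with q(3) show False by (simp add: not_frequently[symmetric])
  qed
  moreover have "ereal r < ereal q2" using q by simp
  ultimately show "ereal r < ?L" by (rule order.strict_trans2[rotated])
qed

section \<open>Upper semicontinuous sequences against a continuous threshold\<close>

locale usc_fsigma_sequence =
  fixes X :: "'x topology" and a :: "'x \<Rightarrow> nat \<Rightarrow> real" and r :: "'x \<Rightarrow> real"
  assumes openin_sublevel: "\<And>n q. openin X {x \<in> topspace X. a x n < q}"
    and fsigma_in_sublevel: "\<And>n q. fsigma_in X {x \<in> topspace X. a x n < q}"
    and continuous_r: "continuous_map X euclideanreal r"
begin

lemma closedin_le_a: "closedin X {x \<in> topspace X. q \<le> a x n}"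
proof -
  have "{x \<in> topspace X. q \<le> a x n} = topspace X - {x \<in> topspace X. a x n < q}" by auto
  then show ?thesis using openin_sublevel by auto
qed

lemma openin_less_r: "openin X {x \<in> topspace X. q < r x}"
  using continuous_r by (simp add: continuous_map_upper_lower_semicontinuous_lt)

lemma
  shows closedin_r_le: "closedin X {x \<in> topspace X. r x \<le> q}"
    and closedin_le_r: "closedin X {x \<in> topspace X. q \<le> r x}"
  using continuous_r by (simp_all add: continuous_map_upper_lower_semicontinuous_le)

lemma openin_a_less_r: "openin X {x \<in> topspace X. a x n < r x}"
proof -
  have "{x \<in> topspace X. a x n < r x} =
      (\<Union>q\<in>\<rat>. {x \<in> topspace X. a x n < q} \<inter> {x \<in> topspace X. q < r x})"
    by (auto simp: less_iff_Rat_between[of "a _ n" "r _"])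
  then show ?thesis by (auto intro!: openin_Union openin_Int openin_sublevel openin_less_r)
qed

lemma fsigma_in_a_less_r: "fsigma_in X {x \<in> topspace X. a x n < r x}"
proof -
  have "{x \<in> topspace X. a x n < r x} =
      (\<Union>q\<in>\<rat>. {x \<in> topspace X. a x n < q} \<inter> {x \<in> topspace X. q \<le> r x})"
    by (auto simp: less_iff_Rat_le[of "a _ n" "r _"])
  then show ?thesis
    by (auto intro!: fsigma_in_Union fsigma_in_Int fsigma_in_sublevel intro: closed_imp_fsigma_in closedin_le_r
        simp: countable_rat)
qed

lemma fsigma_in_r_less_a: "fsigma_in X {x \<in> topspace X. r x < a x n}"
proof -
  have "{x \<in> topspace X. r x < a x n} =
      (\<Union>(q1, q2)\<in>{(q1, q2). q1 \<in> \<rat> \<and> q2 \<in> \<rat> \<and> q1 < q2}.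
         {x \<in> topspace X. r x \<le> q1} \<inter> {x \<in> topspace X. q2 \<le> a x n})"
    by (auto simp: less_iff_Rats_between[of "r _" "a _ n"])
  then show ?thesis
    by (auto intro!: fsigma_in_Union intro: closed_imp_fsigma_in closedin_Int closedin_r_le closedin_le_a
        countable_Rats_less_pairs)
qed

lemma fsigma_in_r_less_liminf:
  "fsigma_in X {x \<in> topspace X. ereal (r x) < liminf (\<lambda>n. ereal (a x n))}"
proof -
  have "{x \<in> topspace X. ereal (r x) < liminf (\<lambda>n. ereal (a x n))} =
      (\<Union>((q1, q2), m)\<in>{(q1, q2). q1 \<in> \<rat> \<and> q2 \<in> \<rat> \<and> q1 < q2} \<times> UNIV.
         {x \<in> topspace X. r x \<le> q1} \<inter> (\<Inter>n\<in>{m..}. {x \<in> topspace X. q2 \<le> a x n}))"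
    by (simp add: ereal_less_liminf_iff_Rats eventually_sequentially atLeast_def set_eq_iff; blast)
  moreover have "closedin X ({x \<in> topspace X. r x \<le> q1} \<inter> (\<Inter>n\<in>{m..}. {x \<in> topspace X. q2 \<le> a x n}))"
    for q1 q2 m
    by (intro closedin_Int closedin_r_le closedin_Inter) (auto intro: closedin_le_a)
  ultimately show ?thesis
    by (auto intro!: fsigma_in_Union countable_SIGMA countable_Rats_less_pairs intro: closed_imp_fsigma_in)
qed

lemma liminf_less_r_in_sigma0_3:
  "{x \<in> topspace X. liminf (\<lambda>n. ereal (a x n)) < ereal (r x)} \<in> sigma0 X 3"
proof -
  have "{x \<in> topspace X. liminf (\<lambda>n. ereal (a x n)) < ereal (r x)} =
      (\<Union>q\<in>\<rat>. {x \<in> topspace X. q < r x} \<inter> (\<Inter>m. \<Union>n\<in>{m..}. {x \<in> topspace X. a x n < q}))"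
    by (simp add: liminf_less_ereal_iff_Rats frequently_sequentially atLeast_def set_eq_iff; blast)
  moreover have "gdelta_in X ({x \<in> topspace X. q < r x} \<inter> (\<Inter>m. \<Union>n\<in>{m..}. {x \<in> topspace X. a x n < q}))"
    for q
    by (intro gdelta_in_Int gdelta_in_Inter open_imp_gdelta_in openin_less_r)
      (auto intro: open_imp_gdelta_in openin_sublevel)
  ultimately show ?thesis by (auto intro!: sigma0_3_UnionI countable_image countable_rat)
qed

lemma limsup_less_r_in_sigma0_3:
  "{x \<in> topspace X. limsup (\<lambda>n. ereal (a x n)) < ereal (r x)} \<in> sigma0 X 3"
proof -
  have "{x \<in> topspace X. limsup (\<lambda>n. ereal (a x n)) < ereal (r x)} =
      (\<Union>(q, m)\<in>\<rat> \<times> UNIV. {x \<in> topspace X. q < r x} \<inter> (\<Inter>n\<in>{m..}. {x \<in> topspace X. a x n < q}))"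
    by (simp add: limsup_less_ereal_iff_Rats eventually_sequentially atLeast_def set_eq_iff; blast)
  moreover have "gdelta_in X ({x \<in> topspace X. q < r x} \<inter> (\<Inter>n\<in>{m..}. {x \<in> topspace X. a x n < q}))"
    for q m
    by (intro gdelta_in_Int gdelta_in_Inter open_imp_gdelta_in openin_less_r)
      (auto intro: open_imp_gdelta_in openin_sublevel)
  ultimately show ?thesis by (auto intro!: sigma0_3_UnionI countable_SIGMA countable_rat)
qed

(* Not implied by the previous lemma: closed sets need not be G_delta in a general topological
   space, so the levels of the hierarchy are not nested. *)
lemma liminf_less_r_in_sigma0_4:
  "{x \<in> topspace X. liminf (\<lambda>n. ereal (a x n)) < ereal (r x)} \<in> sigma0 X 4"
proof -
  have "{x \<in> topspace X. liminf (\<lambda>n. ereal (a x n)) < ereal (r x)} =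
      (\<Union>(q1, q2)\<in>{(q1, q2). q1 \<in> \<rat> \<and> q2 \<in> \<rat> \<and> q1 < q2}.
         topspace X \<inter> (\<Inter>m. {x \<in> topspace X. q2 \<le> r x} \<inter> (\<Union>n\<in>{m..}. {x \<in> topspace X. a x n < q1})))"
    by (simp add: liminf_less_ereal_iff_Rats_le frequently_sequentially atLeast_def set_eq_iff; blast)
  moreover have "topspace X \<inter> (\<Inter>m. {x \<in> topspace X. q2 \<le> r x} \<inter> (\<Union>n\<in>{m..}. {x \<in> topspace X. a x n < q1}))
      \<in> pi0 X 3" for q1 q2
    by (intro pi0_3_INTI fsigma_in_Int fsigma_in_Union closed_imp_fsigma_in[OF closedin_le_r])
      (auto intro: fsigma_in_sublevel)
  ultimately show ?thesis by (auto intro!: sigma0_4_UnionI countable_Rats_less_pairs)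
qed

lemma r_less_limsup_in_sigma0_4:
  "{x \<in> topspace X. ereal (r x) < limsup (\<lambda>n. ereal (a x n))} \<in> sigma0 X 4"
proof -
  have "{x \<in> topspace X. ereal (r x) < limsup (\<lambda>n. ereal (a x n))} =
      (\<Union>(q1, q2)\<in>{(q1, q2). q1 \<in> \<rat> \<and> q2 \<in> \<rat> \<and> q1 < q2}.
         topspace X \<inter> (\<Inter>m. {x \<in> topspace X. r x \<le> q1} \<inter> (\<Union>n\<in>{m..}. {x \<in> topspace X. q2 \<le> a x n})))"
    by (simp add: ereal_less_limsup_iff_Rats frequently_sequentially atLeast_def set_eq_iff; blast)
  moreover have "topspace X \<inter> (\<Inter>m. {x \<in> topspace X. r x \<le> q1} \<inter> (\<Union>n\<in>{m..}. {x \<in> topspace X. q2 \<le> a x n}))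
      \<in> pi0 X 3" for q1 q2
    by (intro pi0_3_INTI fsigma_in_Int fsigma_in_Union closed_imp_fsigma_in[OF closedin_r_le])
      (auto intro: closed_imp_fsigma_in closedin_le_a)
  ultimately show ?thesis by (auto intro!: sigma0_4_UnionI countable_Rats_less_pairs)
qed

end

section \<open>Cantor space and the Vietoris topology\<close>

lemma continuous_map_discrete_UNIV_iff:
  "continuous_map X (discrete_topology UNIV) f \<longleftrightarrow> (\<forall>y. openin X {x \<in> topspace X. f x = y})"
proof
  assume "continuous_map X (discrete_topology UNIV) f"
  then show "\<forall>y. openin X {x \<in> topspace X. f x = y}"
    using openin_continuous_map_preimage[of X _ f "{_}"] by auto
next
  assume fibres: "\<forall>y. openin X {x \<in> topspace X. f x = y}"
  have "{x \<in> topspace X. f x \<in> U} = (\<Union>y\<in>U. {x \<in> topspace X. f x = y})" for U by auto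
  then show "continuous_map X (discrete_topology UNIV) f"
    using fibres by (auto simp: continuous_map_def)
qed

lemma topspace_cantor [simp]: "topspace cantor = UNIV"
  unfolding cantor_def by (simp add: PiE_UNIV_domain)

lemma Hausdorff_space_cantor: "Hausdorff_space cantor"
  unfolding cantor_def by (simp add: Hausdorff_space_product_topology Hausdorff_space_discrete_topology)

lemma length_restr [simp]: "length (restr x j) = j"
  by (simp add: restr_def)

lemma nth_restr [simp]: "i < j \<Longrightarrow> restr x j ! i = x i"
  by (simp add: restr_def)

lemma restr_eq_iff: "restr x j = t \<longleftrightarrow> length t = j \<and> (\<forall>i<j. x i = t ! i)"
  unfolding restr_def by (auto simp: list_eq_iff_nth_eq)

lemma restr_take: "m \<le> n \<Longrightarrow> restr x m = take m (restr x n)"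
  unfolding restr_def by (simp add: take_map)

lemma restr_eq_imp_le: "restr x n = restr y n \<Longrightarrow> m \<le> n \<Longrightarrow> restr x m = restr y m"
  by (metis restr_take)

lemma Nbhd_eq: "Nbhd s = {x. restr x (length s) = s}"
  unfolding Nbhd_def by (auto simp: restr_eq_iff)

lemma openin_cantor_restr_eq: "openin cantor {x. restr x j = t}"
proof (cases "length t = j")
  case True
  have "{x. restr x j = t} = PiE UNIV (\<lambda>i. if i < j then {t ! i} else UNIV)"
    using True by (auto simp: restr_eq_iff PiE_def Pi_def extensional_def)
  moreover have "finite {i. (if i < j then {t ! i} else UNIV) \<noteq> (UNIV :: bool set)}"
    by (rule finite_subset[of _ "{..<j}"]) auto
  ultimately show ?thesis
    unfolding cantor_def by (simp add: openin_PiE_gen)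
next
  case False
  then have "{x. restr x j = t} = {}" by (auto simp: restr_eq_iff)
  then show ?thesis by simp
qed

lemma continuous_map_restr: "continuous_map cantor (discrete_topology UNIV) (\<lambda>x. restr x j)"
  by (simp add: continuous_map_discrete_UNIV_iff openin_cantor_restr_eq)

lemma closedin_cantor_separation:
  assumes "closedin cantor K" "x \<notin> K"
  obtains j where "\<And>y. restr y j = restr x j \<Longrightarrow> y \<notin> K"
proof -
  have "openin cantor (- K)" using assms(1) by (simp add: closedin_def Compl_eq_Diff_UNIV)
  then have "\<forall>x\<in>- K. \<exists>U. finite {i. U i \<noteq> UNIV} \<and> x \<in> PiE UNIV U \<and> PiE UNIV U \<subseteq> - K"
    unfolding cantor_def openin_product_topology_alt by simp
  with assms(2) obtain U where U: "finite {i. U i \<noteq> UNIV}" "x \<in> PiE UNIV U" "PiE UNIV U \<subseteq> - K"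
    by blast
  obtain j where j: "{i. U i \<noteq> UNIV} \<subseteq> {..<j}" using finite_nat_bounded[OF U(1)] by blast
  have "y \<notin> K" if "restr y j = restr x j" for y
  proof -
    have "y i \<in> U i" for i
      using that j U(2) by (cases "i < j") (auto simp: restr_eq_iff PiE_def Pi_def)
    then show ?thesis using U(3) by (auto simp: PiE_def Pi_def)
  qed
  then show ?thesis using that by blast
qed

definition prefixes :: "nat \<Rightarrow> (nat \<Rightarrow> bool) set \<Rightarrow> bool list set" where
  "prefixes j K = (\<lambda>x. restr x j) ` K"

lemma INT_prefix_covers:
  assumes "closedin cantor K"
  shows "(\<Inter>j. {x. restr x j \<in> prefixes j K}) = K"
proof
  show "(\<Inter>j. {x. restr x j \<in> prefixes j K}) \<subseteq> K"
  proof
    fix x assume x: "x \<in> (\<Inter>j. {x. restr x j \<in> prefixes j K})"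
    show "x \<in> K"
    proof (rule ccontr)
      assume "x \<notin> K"
      then obtain j where j: "\<And>y. restr y j = restr x j \<Longrightarrow> y \<notin> K"
        using closedin_cantor_separation assms by blast
      from x obtain y where "y \<in> K" "restr x j = restr y j" by (auto simp: prefixes_def)
      with j show False by metis
    qed
  qed
qed (auto simp: prefixes_def)

lemma decseq_prefix_covers: "decseq (\<lambda>j. {x. restr x j \<in> prefixes j K})"
proof (rule decseq_SucI, rule subsetI)
  fix n x assume "x \<in> {x. restr x (Suc n) \<in> prefixes (Suc n) K}"
  then obtain y where "y \<in> K" "restr x (Suc n) = restr y (Suc n)" by (auto simp: prefixes_def)
  then have "y \<in> K" "restr x n = restr y n" by (auto intro: restr_eq_imp_le)
  then show "x \<in> {x. restr x n \<in> prefixes n K}" by (auto simp: prefixes_def)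
qed

lemma openin_vietoris_subset: "openin X U \<Longrightarrow> openin (vietoris X) {K. compactin X K \<and> K \<subseteq> U}"
  unfolding vietoris_def by (rule topology_generated_by_Basis, rule UnI1) auto

lemma openin_vietoris_meets: "openin X U \<Longrightarrow> openin (vietoris X) {K. compactin X K \<and> K \<inter> U \<noteq> {}}"
  unfolding vietoris_def by (rule topology_generated_by_Basis, rule UnI2) auto

lemma topspace_vietoris: "topspace (vietoris X) = {K. compactin X K}"
proof
  show "topspace (vietoris X) \<subseteq> {K. compactin X K}"
    unfolding vietoris_def topology_generated_by_topspace by auto
  have "{K. compactin X K} = {K. compactin X K \<and> K \<subseteq> topspace X}"
    by (auto dest: compactin_subset_topspace)
  then show "{K. compactin X K} \<subseteq> topspace (vietoris X)"
    using openin_subset[OF openin_vietoris_subset[OF openin_topspace]] by simp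
qed

lemma continuous_map_prefixes: "continuous_map (vietoris cantor) (discrete_topology UNIV) (prefixes j)"
  unfolding continuous_map_discrete_UNIV_iff
proof
  fix T
  show "openin (vietoris cantor) {K \<in> topspace (vietoris cantor). prefixes j K = T}"
  proof (cases "T \<subseteq> {t. length t = j}")
    case True
    then have "finite T"
      using finite_lists_length_eq[of "UNIV :: bool set" j] by (auto intro: finite_subset)
    have "{K \<in> topspace (vietoris cantor). prefixes j K = T} =
        {K. compactin cantor K \<and> K \<subseteq> {x. restr x j \<in> T}} \<inter>
        (\<Inter>t\<in>T. {K. compactin cantor K \<and> K \<inter> {x. restr x j = t} \<noteq> {}})"
      by (auto simp: topspace_vietoris prefixes_def)
    moreover have "openin cantor {x. restr x j \<in> T}"
      using openin_continuous_map_preimage[OF continuous_map_restr, of T] by simp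
    ultimately show ?thesis
      using \<open>finite T\<close>
      by (simp only:) (intro openin_Int_Inter openin_vietoris_subset; auto intro: openin_vietoris_meets
          openin_cantor_restr_eq)
  next
    case False
    then have empty: "{K \<in> topspace (vietoris cantor). prefixes j K = T} = {}"
      by (auto simp: prefixes_def)
    show ?thesis unfolding empty by simp
  qed
qed

section \<open>The coin-tossing measure\<close>

lemma space_coin [simp]: "space coin = UNIV"
  unfolding coin_def by (simp add: space_PiM PiE_UNIV_domain)

lemma prob_space_coin: "prob_space coin"
  unfolding coin_def by (rule prob_space_PiM) (simp add: prob_space_measure_pmf)

lemma coordinate_in_sets_coin: "{x. x i = b} \<in> sets coin"
proof -
  have "(\<lambda>x. x i) \<in> measurable coin (measure_pmf (bernoulli_pmf (1/2)))"
    unfolding coin_def by (rule measurable_component_singleton) simp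
  from measurable_sets[OF this, of "{b}"] show ?thesis by (simp add: vimage_def)
qed

lemma cylinder_in_sets_coin: "{x. restr x j \<in> T} \<in> sets coin"
proof (induction j arbitrary: T)
  case 0
  then show ?case
    using sets.top[of coin] by (cases "[] \<in> T") (auto simp: restr_def)
next
  case (Suc j)
  have "{x. restr x (Suc j) \<in> T} =
     ({x. restr x j \<in> {t. t @ [True] \<in> T}} \<inter> {x. x j = True}) \<union>
     ({x. restr x j \<in> {t. t @ [False] \<in> T}} \<inter> {x. x j = False})"
    by (rule set_eqI) (case_tac "x j"; auto simp: restr_def)
  then show ?case
    by (simp only:) (intro sets.Un sets.Int Suc.IH coordinate_in_sets_coin)
qed

lemma Nbhd_in_sets_coin: "Nbhd s \<in> sets coin"
  unfolding Nbhd_eq using cylinder_in_sets_coin[of "length s" "{s}"] by simp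

lemma mu_prefix_covers_tendsto:
  assumes "closedin cantor K" "A \<in> sets coin"
  shows "(\<lambda>j. mu ({x. restr x j \<in> prefixes j K} \<inter> A)) \<longlonglongrightarrow> mu (K \<inter> A)"
proof -
  interpret prob_space coin by (rule prob_space_coin)
  have "(\<lambda>j. measure coin ({x. restr x j \<in> prefixes j K} \<inter> A)) \<longlonglongrightarrow>
      measure coin (\<Inter>j. {x. restr x j \<in> prefixes j K} \<inter> A)"
    using decseq_prefix_covers[of K] assms(2)
    by (intro finite_Lim_measure_decseq) (auto simp: decseq_def intro: cylinder_in_sets_coin)
  moreover have "(\<Inter>j. {x. restr x j \<in> prefixes j K} \<inter> A) = K \<inter> A"
    using INT_prefix_covers[OF assms(1)] by auto
  ultimately show ?thesis by (simp add: mu_def)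
qed

lemma mu_le_prefix_cover:
  assumes "A \<in> sets coin"
  shows "mu (K \<inter> A) \<le> mu ({x. restr x j \<in> prefixes j K} \<inter> A)"
proof -
  interpret prob_space coin by (rule prob_space_coin)
  show ?thesis
    unfolding mu_def using assms
    by (intro finite_measure_mono) (auto simp: prefixes_def intro: cylinder_in_sets_coin)
qed

lemma less_iff_ex_less_of_tendsto_above:
  fixes f :: "nat \<Rightarrow> real"
  assumes "f \<longlonglongrightarrow> L" "\<And>j. L \<le> f j"
  shows "L < c \<longleftrightarrow> (\<exists>j. f j < c)"
proof
  assume "L < c"
  with assms(1) have "\<forall>\<^sub>F j in sequentially. f j < c" by (rule order_tendstoD)
  then show "\<exists>j. f j < c" by (auto simp: eventually_sequentially)
qed (use assms(2) in \<open>auto intro: order.strict_trans1\<close>)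

lemma mu_Int_div_less_iff:
  assumes "closedin cantor K" "A \<in> sets coin" "0 \<le> d"
  shows "mu (K \<inter> A) / d < c \<longleftrightarrow> (\<exists>j. mu ({x. restr x j \<in> prefixes j K} \<inter> A) / d < c)"
proof (rule less_iff_ex_less_of_tendsto_above)
  show "(\<lambda>j. mu ({x. restr x j \<in> prefixes j K} \<inter> A) / d) \<longlonglongrightarrow> mu (K \<inter> A) / d"
    using mu_prefix_covers_tendsto[OF assms(1,2)] by (simp add: divide_inverse tendsto_mult_right)
  show "mu (K \<inter> A) / d \<le> mu ({x. restr x j \<in> prefixes j K} \<inter> A) / d" for j
    using mu_le_prefix_cover[OF assms(2)] assms(3) by (rule divide_right_mono)
qed

lemma
  assumes "\<And>j::nat. continuous_map X (discrete_topology UNIV) (\<phi> j)"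
  shows openin_UN_discrete_preimage: "openin X (\<Union>j. {x \<in> topspace X. \<phi> j x \<in> P j})"
    and fsigma_in_UN_discrete_preimage: "fsigma_in X (\<Union>j. {x \<in> topspace X. \<phi> j x \<in> P j})"
proof -
  have "openin X {x \<in> topspace X. \<phi> j x \<in> P j}" "closedin X {x \<in> topspace X. \<phi> j x \<in> P j}" for j
    using openin_continuous_map_preimage[OF assms] closedin_continuous_map_preimage[OF assms] by auto
  then show "openin X (\<Union>j. {x \<in> topspace X. \<phi> j x \<in> P j})"
    and "fsigma_in X (\<Union>j. {x \<in> topspace X. \<phi> j x \<in> P j})"
    by (auto intro!: fsigma_in_Union intro: closed_imp_fsigma_in)
qed

lemma closedin_cantor_if_compactin: "compactin cantor K \<Longrightarrow> closedin cantor K"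
  by (rule compactin_imp_closedin[OF Hausdorff_space_cantor])

lemma topspace_spaceA: "topspace spaceA = {K. compactin cantor K} \<times> UNIV \<times> UNIV \<times> {0..1}"
  by (simp add: spaceA_def unit_iv_def topspace_vietoris)

lemma topspace_spaceB: "topspace spaceB = {K. compactin cantor K} \<times> UNIV \<times> {0..1}"
  by (simp add: spaceB_def unit_iv_def topspace_vietoris)

lemma continuous_map_spaceA_prefix_data:
  "continuous_map spaceA (discrete_topology UNIV)
     (\<lambda>p. (prefixes j (fst p), restr (fst (snd p)) (fst (snd (snd p)))))"
  unfolding continuous_map_discrete_UNIV_iff
proof (intro allI)
  fix y :: "bool list set \<times> bool list"
  obtain T s where y: "y = (T, s)" by force
  have "{p \<in> topspace spaceA. (prefixes j (fst p), restr (fst (snd p)) (fst (snd (snd p)))) = y} =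
      {K \<in> topspace (vietoris cantor). prefixes j K = T} \<times> {z. restr z (length s) = s} \<times> {length s} \<times> {0..1}"
    by (auto simp: y topspace_spaceA topspace_vietoris restr_eq_iff)
  moreover have "openin (vietoris cantor) {K \<in> topspace (vietoris cantor). prefixes j K = T}"
    using continuous_map_prefixes by (simp add: continuous_map_discrete_UNIV_iff)
  ultimately show "openin spaceA {p \<in> topspace spaceA. (prefixes j (fst p), restr (fst (snd p)) (fst (snd (snd p)))) = y}"
    by (simp add: spaceA_def openin_prod_Times_iff openin_cantor_restr_eq unit_iv_def)
qed

lemma continuous_map_spaceB_prefix_data:
  "continuous_map spaceB (discrete_topology UNIV) (\<lambda>p. (prefixes j (fst p), restr (fst (snd p)) n))"
  unfolding continuous_map_discrete_UNIV_iff
proof (intro allI)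
  fix y :: "bool list set \<times> bool list"
  obtain T s where y: "y = (T, s)" by force
  have "{p \<in> topspace spaceB. (prefixes j (fst p), restr (fst (snd p)) n) = y} =
      {K \<in> topspace (vietoris cantor). prefixes j K = T} \<times> {z. restr z n = s} \<times> {0..1}"
    by (auto simp: y topspace_spaceB topspace_vietoris)
  moreover have "openin (vietoris cantor) {K \<in> topspace (vietoris cantor). prefixes j K = T}"
    using continuous_map_prefixes by (simp add: continuous_map_discrete_UNIV_iff)
  ultimately show "openin spaceB {p \<in> topspace spaceB. (prefixes j (fst p), restr (fst (snd p)) n) = y}"
    by (simp add: spaceB_def openin_prod_Times_iff openin_cantor_restr_eq unit_iv_def)
qed

lemma continuous_map_spaceA_coordinate: "continuous_map spaceA euclideanreal (\<lambda>p. snd (snd (snd p)))"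
proof -
  have "continuous_map spaceA unit_iv (snd \<circ> snd \<circ> snd)"
    unfolding spaceA_def
    by (rule continuous_map_compose[OF continuous_map_snd
        continuous_map_compose[OF continuous_map_snd continuous_map_snd]])
  then show ?thesis by (simp add: unit_iv_def continuous_map_in_subtopology o_def)
qed

lemma continuous_map_spaceB_coordinate: "continuous_map spaceB euclideanreal (\<lambda>p. snd (snd p))"
proof -
  have "continuous_map spaceB unit_iv (snd \<circ> snd)"
    unfolding spaceB_def by (rule continuous_map_compose[OF continuous_map_snd continuous_map_snd])
  then show ?thesis by (simp add: unit_iv_def continuous_map_in_subtopology o_def)
qed

lemma mass_sublevel_eq:
  "{p \<in> topspace spaceA. mu (fst p \<inter> Nbhd (restr (fst (snd p)) (fst (snd (snd p))))) < q} =
    (\<Union>j. {p \<in> topspace spaceA. (prefixes j (fst p), restr (fst (snd p)) (fst (snd (snd p))))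
              \<in> {(T, s). mu ({x. restr x j \<in> T} \<inter> Nbhd s) < q}})"
  using mu_Int_div_less_iff[OF closedin_cantor_if_compactin Nbhd_in_sets_coin, of _ 1]
  by (auto simp: topspace_spaceA)

lemma ratio_sublevel_eq:
  "{p \<in> topspace spaceB. ratio (fst p) (fst (snd p)) n < q} =
    (\<Union>j. {p \<in> topspace spaceB. (prefixes j (fst p), restr (fst (snd p)) n)
              \<in> {(T, s). mu ({x. restr x j \<in> T} \<inter> Nbhd s) / mu (Nbhd s) < q}})"
  using mu_Int_div_less_iff[OF closedin_cantor_if_compactin Nbhd_in_sets_coin]
  by (auto simp: topspace_spaceB ratio_def mu_def)

(* The measure in part (a) does not depend on the sequence index: a constant sequence. *)
interpretation mass: usc_fsigma_sequence spaceA
  "\<lambda>p _. mu (fst p \<inter> Nbhd (restr (fst (snd p)) (fst (snd (snd p)))))" "\<lambda>p. snd (snd (snd p))"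
  by unfold_locales
    (simp_all only: mass_sublevel_eq openin_UN_discrete_preimage fsigma_in_UN_discrete_preimage
      continuous_map_spaceA_prefix_data continuous_map_spaceA_coordinate)

interpretation density: usc_fsigma_sequence spaceB
  "\<lambda>p n. ratio (fst p) (fst (snd p)) n" "\<lambda>p. snd (snd p)"
  by unfold_locales
    (simp_all only: ratio_sublevel_eq openin_UN_discrete_preimage fsigma_in_UN_discrete_preimage
      continuous_map_spaceB_prefix_data continuous_map_spaceB_coordinate)

lemma setA_eq:
  "setA R = {p \<in> topspace spaceA.
     R (mu (fst p \<inter> Nbhd (restr (fst (snd p)) (fst (snd (snd p)))))) (snd (snd (snd p)))}"
  by (auto simp: setA_def)

lemma setBminus_eq:
  "setBminus R = {p \<in> topspace spaceB.
     R (liminf (\<lambda>n. ereal (ratio (fst p) (fst (snd p)) n))) (ereal (snd (snd p)))}"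
  by (auto simp: setBminus_def Dminus_def)

lemma setBplus_eq:
  "setBplus R = {p \<in> topspace spaceB.
     R (limsup (\<lambda>n. ereal (ratio (fst p) (fst (snd p)) n))) (ereal (snd (snd p)))}"
  by (auto simp: setBplus_def Dplus_def)

theorem lemma3p1:
  shows "setA (<) \<in> sigma0 spaceA 1 \<and> setA (\<ge>) \<in> pi0 spaceA 1 \<and>
         setA (\<le>) \<in> pi0 spaceA 2 \<and> setA (>) \<in> sigma0 spaceA 2 \<and>
         setA (\<le>) \<inter> setA (\<ge>) \<in> pi0 spaceA 2 \<and>
         setBminus (\<le>) \<in> pi0 spaceB 2 \<and>
         setBminus (\<ge>) \<in> pi0 spaceB 3 \<and> setBplus (\<ge>) \<in> pi0 spaceB 3 \<and>
         setBplus (\<le>) \<in> pi0 spaceB 4 \<and>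
         setBminus (>) \<in> sigma0 spaceB 2 \<and>
         setBminus (<) \<in> sigma0 spaceB 3 \<and> setBplus (<) \<in> sigma0 spaceB 3 \<and>
         setBplus (>) \<in> sigma0 spaceB 4 \<and>
         setBplus (\<le>) \<inter> setBminus (\<ge>) \<in> pi0 spaceB 4"
proof -
  have A_less: "setA (<) \<in> sigma0 spaceA 1"
    using mass.openin_a_less_r by (simp add: setA_eq sigma0_1)
  have A_greater: "setA (>) \<in> sigma0 spaceA 2"
    using mass.fsigma_in_r_less_a by (simp add: setA_eq sigma0_2)
  have A_neq: "setA (>) \<union> setA (<) \<in> sigma0 spaceA 2"
    using mass.fsigma_in_r_less_a mass.fsigma_in_a_less_r by (simp add: setA_eq sigma0_2 fsigma_in_Un)
  have Bm_greater: "setBminus (>) \<in> sigma0 spaceB 2"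
    using density.fsigma_in_r_less_liminf by (simp add: setBminus_eq sigma0_2)
  have Bm_less: "setBminus (<) \<in> sigma0 spaceB 3"
    using density.liminf_less_r_in_sigma0_3 by (simp add: setBminus_eq)
  have Bp_less: "setBplus (<) \<in> sigma0 spaceB 3"
    using density.limsup_less_r_in_sigma0_3 by (simp add: setBplus_eq)
  have Bp_greater: "setBplus (>) \<in> sigma0 spaceB 4"
    using density.r_less_limsup_in_sigma0_4 by (simp add: setBplus_eq)
  have B_neq: "setBplus (>) \<union> setBminus (<) \<in> sigma0 spaceB 4"
    using sigma0_4_Un[OF Bp_greater] density.liminf_less_r_in_sigma0_4 by (simp add: setBminus_eq)
  have equalities:
    "setA (\<le>) \<inter> setA (\<ge>) = topspace spaceA - (setA (>) \<union> setA (<))"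
    "setBplus (\<le>) \<inter> setBminus (\<ge>) = topspace spaceB - (setBplus (>) \<union> setBminus (<))"
    by (auto simp: setA_def setBminus_def setBplus_def)
  have complements:
    "setA (\<ge>) = topspace spaceA - setA (<)" "setA (\<le>) = topspace spaceA - setA (>)"
    "setBminus (\<le>) = topspace spaceB - setBminus (>)" "setBminus (\<ge>) = topspace spaceB - setBminus (<)"
    "setBplus (\<ge>) = topspace spaceB - setBplus (<)" "setBplus (\<le>) = topspace spaceB - setBplus (>)"
    by (auto simp: setA_def setBminus_def setBplus_def)
  show ?thesis
    unfolding equalities unfolding complements
    by (intro conjI Diff_in_pi0 A_less A_greater A_neq Bm_greater Bm_less Bp_less Bp_greater B_neq)
qed

end
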